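(* Suppose $S\subseteq\mathbb{N}^{\mathbb{N}}$ is guessable. Then $S$ is defined by some sentence $\exists x\,\forall y\,\phi$ of $\mathscr{L}_{\max}$ and also by some sentence $\forall x\,\exists y\,\psi$ of $\mathscr{L}_{\max}$, where $\phi$ and $\psi$ are quantifier-free.
   Context: A function $G:\mathbb{N}^{<\mathbb{N}}\to\{0,1\}$ ($\mathbb{N}^{<\mathbb{N}}$ = finite sequences of naturals) is a guesser for $S\subseteq\mathbb{N}^{\mathbb{N}}$ if for every $f:\mathbb{N}\to\mathbb{N}$ there is $m>0$ such that for all $n>m$, $G(f(0),\ldots,f(n))$ equals $1$ if $f\in S$ and $0$ if $f\notin S$; $S$ is guessable if it has a guesser. The language $\mathscr{L}_{\max}$ is a first-order language extended with ellipses: constant symbols $\mathbf{n}$ (also $\bar n$) for each $n\in\mathbb{N}$; an $n$-ary function symbol $\tilde w$ for each $w:\mathbb{N}^n\to\mathbb{N}$ ($n>0$); an $n$-ary predicate symbol $\tilde p$ for each $p\subseteq\mathbb{N}^n$ ($n>0$); an $\mathbb{N}^{<\mathbb{N}}$-ary function symbol $\tilde G$ for each $G:\mathbb{N}^{<\mathbb{N}}\to\mathbb{N}$ (applicable to any finite number of arguments); a unary function symbol $\mathbf{f}$; and a symbol $\cdots_x$ for each variable $x$. Besides the usual terms, for $\mathbb{N}^{<\mathbb{N}}$-ary $G$, terms $u,v$ and variable $x$, $G(u(\mathbf{0}),\cdots_x,u(v))$ is a term with free variables $(FV(u)\setminus\{x\})\cup FV(v)$. Formulas are built as usual. For $f:\mathbb{N}\to\mathbb{N}$,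 $\mathscr{M}_f$ is the structure on $\mathbb{N}$ interpreting every symbol as the object it names and $\mathbf{f}$ as $f$; terms are evaluated as usual, plus $G(u(\mathbf{0}),\cdots_x,u(v))^{s}=G\big(u(x|\mathbf{0})^{s},\ldots,u(x|\overline{v^{s}})^{s}\big)$ under an assignment $s$, where $u(x|c)$ is substitution of the constant $c$ for $x$ in $u$. A sentence $\phi$ defines $S\subseteq\mathbb{N}^{\mathbb{N}}$ if for every $f:\mathbb{N}\to\mathbb{N}$, $\mathscr{M}_f\models\phi$ iff $f\in S$. *)

theory Defs
  imports Main
begin

text \<open>An n-ary function symbol for w : N^n -> N is
  represented as Fn n w ts with w acting on argument lists (well-formedness requires
  n > 0 and length ts = n). An N^<N-ary symbol G is GF G ts (any number of arguments).
  Ff t is the unary symbol f. Ell G u x v is the ellipsis term G(u(0), ..._x, u(v)),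
  which binds x in u.\<close>

datatype trm =
    Var nat
  | Cst nat
  | Fn nat "nat list \<Rightarrow> nat" "trm list"
  | GF "nat list \<Rightarrow> nat" "trm list"
  | Ff trm
  | Ell "nat list \<Rightarrow> nat" trm nat trm

datatype fm =
    Eq trm trm
  | Pr nat "nat list \<Rightarrow> bool" "trm list"
  | Neg fm
  | Conj fm fm
  | Disj fm fm
  | Imp fm fm
  | Iff fm fm
  | All nat fm
  | Ex nat fm

fun subst :: "nat \<Rightarrow> nat \<Rightarrow> trm \<Rightarrow> trm" where
  "subst x c (Var y) = (if y = x then Cst c else Var y)"
| "subst x c (Cst n) = Cst n"
| "subst x c (Fn n w ts) = Fn n w (map (subst x c) ts)"
| "subst x c (GF G ts) = GF G (map (subst x c) ts)"
| "subst x c (Ff t) = Ff (subst x c t)"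
| "subst x c (Ell G u y v) = Ell G (if y = x then u else subst x c u) y (subst x c v)"

lemma size_subst[simp]: "size (subst x c t) = size t"
proof (induction t)
  case (Fn n w ts)
  then show ?case by (induction ts) auto
next
  case (GF G ts)
  then show ?case by (induction ts) auto
qed auto

function eval :: "(nat \<Rightarrow> nat) \<Rightarrow> (nat \<Rightarrow> nat) \<Rightarrow> trm \<Rightarrow> nat" where
  "eval f s (Var y) = s y"
| "eval f s (Cst n) = n"
| "eval f s (Fn n w ts) = w (map (eval f s) ts)"
| "eval f s (GF G ts) = G (map (eval f s) ts)"
| "eval f s (Ff t) = f (eval f s t)"
| "eval f s (Ell G u x v) = G (map (\<lambda>i. eval f s (subst x i u)) [0..<Suc (eval f s v)])"
  by pat_completeness auto
termination
  by (relation "measure (\<lambda>(f, s, t). size t)") (auto simp: less_Suc_eq_le size_list_estimation')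

fun sat :: "(nat \<Rightarrow> nat) \<Rightarrow> (nat \<Rightarrow> nat) \<Rightarrow> fm \<Rightarrow> bool" where
  "sat f s (Eq t1 t2) = (eval f s t1 = eval f s t2)"
| "sat f s (Pr n p ts) = p (map (eval f s) ts)"
| "sat f s (Neg \<phi>) = (\<not> sat f s \<phi>)"
| "sat f s (Conj \<phi> \<psi>) = (sat f s \<phi> \<and> sat f s \<psi>)"
| "sat f s (Disj \<phi> \<psi>) = (sat f s \<phi> \<or> sat f s \<psi>)"
| "sat f s (Imp \<phi> \<psi>) = (sat f s \<phi> \<longrightarrow> sat f s \<psi>)"
| "sat f s (Iff \<phi> \<psi>) = (sat f s \<phi> \<longleftrightarrow> sat f s \<psi>)"
| "sat f s (All x \<phi>) = (\<forall>n. sat f (s(x := n)) \<phi>)"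
| "sat f s (Ex x \<phi>) = (\<exists>n. sat f (s(x := n)) \<phi>)"

fun wf_trm :: "trm \<Rightarrow> bool" where
  "wf_trm (Var y) = True"
| "wf_trm (Cst n) = True"
| "wf_trm (Fn n w ts) = (0 < n \<and> length ts = n \<and> (\<forall>t\<in>set ts. wf_trm t))"
| "wf_trm (GF G ts) = (\<forall>t\<in>set ts. wf_trm t)"
| "wf_trm (Ff t) = wf_trm t"
| "wf_trm (Ell G u x v) = (wf_trm u \<and> wf_trm v)"

fun wf_fm :: "fm \<Rightarrow> bool" where
  "wf_fm (Eq t1 t2) = (wf_trm t1 \<and> wf_trm t2)"
| "wf_fm (Pr n p ts) = (0 < n \<and> length ts = n \<and> (\<forall>t\<in>set ts. wf_trm t))"
| "wf_fm (Neg \<phi>) = wf_fm \<phi>"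
| "wf_fm (Conj \<phi> \<psi>) = (wf_fm \<phi> \<and> wf_fm \<psi>)"
| "wf_fm (Disj \<phi> \<psi>) = (wf_fm \<phi> \<and> wf_fm \<psi>)"
| "wf_fm (Imp \<phi> \<psi>) = (wf_fm \<phi> \<and> wf_fm \<psi>)"
| "wf_fm (Iff \<phi> \<psi>) = (wf_fm \<phi> \<and> wf_fm \<psi>)"
| "wf_fm (All x \<phi>) = wf_fm \<phi>"
| "wf_fm (Ex x \<phi>) = wf_fm \<phi>"

fun FV_trm :: "trm \<Rightarrow> nat set" where
  "FV_trm (Var y) = {y}"
| "FV_trm (Cst n) = {}"
| "FV_trm (Fn n w ts) = (\<Union>t\<in>set ts. FV_trm t)"
| "FV_trm (GF G ts) = (\<Union>t\<in>set ts. FV_trm t)"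
| "FV_trm (Ff t) = FV_trm t"
| "FV_trm (Ell G u x v) = (FV_trm u - {x}) \<union> FV_trm v"

fun FV :: "fm \<Rightarrow> nat set" where
  "FV (Eq t1 t2) = FV_trm t1 \<union> FV_trm t2"
| "FV (Pr n p ts) = (\<Union>t\<in>set ts. FV_trm t)"
| "FV (Neg \<phi>) = FV \<phi>"
| "FV (Conj \<phi> \<psi>) = FV \<phi> \<union> FV \<psi>"
| "FV (Disj \<phi> \<psi>) = FV \<phi> \<union> FV \<psi>"
| "FV (Imp \<phi> \<psi>) = FV \<phi> \<union> FV \<psi>"
| "FV (Iff \<phi> \<psi>) = FV \<phi> \<union> FV \<psi>"
| "FV (All x \<phi>) = FV \<phi> - {x}"
| "FV (Ex x \<phi>) = FV \<phi> - {x}"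

fun qfree :: "fm \<Rightarrow> bool" where
  "qfree (All x \<phi>) = False"
| "qfree (Ex x \<phi>) = False"
| "qfree (Neg \<phi>) = qfree \<phi>"
| "qfree (Conj \<phi> \<psi>) = (qfree \<phi> \<and> qfree \<psi>)"
| "qfree (Disj \<phi> \<psi>) = (qfree \<phi> \<and> qfree \<psi>)"
| "qfree (Imp \<phi> \<psi>) = (qfree \<phi> \<and> qfree \<psi>)"
| "qfree (Iff \<phi> \<psi>) = (qfree \<phi> \<and> qfree \<psi>)"
| "qfree _ = True"

definition sentence :: "fm \<Rightarrow> bool" where
  "sentence \<phi> \<longleftrightarrow> wf_fm \<phi> \<and> FV \<phi> = {}"

text \<open>M_f |= phi for a sentence (the assignment is irrelevant; we use the constant 0 one).\<close>
definition models :: "(nat \<Rightarrow> nat) \<Rightarrow> fm \<Rightarrow> bool" where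
  "models f \<phi> \<longleftrightarrow> sat f (\<lambda>_. 0) \<phi>"

definition defines_set :: "fm \<Rightarrow> (nat \<Rightarrow> nat) set \<Rightarrow> bool" where
  "defines_set \<phi> S \<longleftrightarrow> (\<forall>f. models f \<phi> \<longleftrightarrow> f \<in> S)"

definition guesser :: "(nat list \<Rightarrow> nat) \<Rightarrow> (nat \<Rightarrow> nat) set \<Rightarrow> bool" where
  "guesser G S \<longleftrightarrow> (\<forall>l. G l \<in> {0, 1}) \<and>
     (\<forall>f. \<exists>m>0. \<forall>n>m. G (map f [0..<Suc n]) = (if f \<in> S then 1 else 0))"

definition guessable :: "(nat \<Rightarrow> nat) set \<Rightarrow> bool" where
  "guessable S \<longleftrightarrow> (\<exists>G. guesser G S)"

end

theory Submission
  imports Defs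
begin

text \<open>A guesser's answers on the prefixes of f are eventually constant, equal to 1 exactly when
  f \<in> S. Hence f \<in> S iff the answer is 1 on all sufficiently long prefixes
  (an \<exists>\<forall> condition), iff it is 1 on arbitrarily long prefixes (a \<forall>\<exists> condition).
  Both conditions are expressed by one ellipsis term G(f(0), \<dots>, f(y)) and one order predicate.\<close>

lemma guesser_eventually:
  assumes "guesser G S"
  shows "\<forall>\<^sub>F n in sequentially. G (map f [0..<Suc n]) = (if f \<in> S then 1 else 0)"
proof -
  obtain m where "\<forall>n>m. G (map f [0..<Suc n]) = (if f \<in> S then 1 else 0)"
    using assms unfolding guesser_def by blast
  then show ?thesis
    by (intro eventually_sequentiallyI[of "Suc m"]) auto
qed

lemma eventually_eq_iff_eventually_const:
  assumes "\<forall>\<^sub>F n in F. a n = c" and "F \<noteq> bot"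
  shows "(\<forall>\<^sub>F n in F. a n = b) \<longleftrightarrow> c = b"
proof
  assume "\<forall>\<^sub>F n in F. a n = b"
  with assms(1) have "\<forall>\<^sub>F n in F. c = b"
    by eventually_elim simp
  with assms(2) show "c = b"
    by (simp add: eventually_const_iff)
qed (use assms(1) in simp)

lemma frequently_eq_iff_eventually_const:
  assumes "\<forall>\<^sub>F n in F. a n = c" and "F \<noteq> bot"
  shows "(\<exists>\<^sub>F n in F. a n = b) \<longleftrightarrow> c = b"
proof -
  have "(\<forall>\<^sub>F n in F. a n \<noteq> b) \<longleftrightarrow> c \<noteq> b"
  proof
    assume "\<forall>\<^sub>F n in F. a n \<noteq> b"
    with assms(1) have "\<forall>\<^sub>F n in F. c \<noteq> b"
      by eventually_elim simp
    with assms(2) show "c \<noteq> b"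
      by (simp add: eventually_const_iff)
  qed (use assms(1) in \<open>auto elim: eventually_mono\<close>)
  then show ?thesis
    by (simp add: frequently_def)
qed

definition guess_on_prefix :: "(nat list \<Rightarrow> nat) \<Rightarrow> trm" where
  "guess_on_prefix G = Ell G (Ff (Var 2)) 2 (Var 1)"

definition le_fm :: fm where
  "le_fm = Pr 2 (\<lambda>l. l ! 0 \<le> l ! 1) [Var 0, Var 1]"

definition eventually_guess_fm :: "(nat list \<Rightarrow> nat) \<Rightarrow> fm" where
  "eventually_guess_fm G = Imp le_fm (Eq (guess_on_prefix G) (Cst 1))"

definition frequently_guess_fm :: "(nat list \<Rightarrow> nat) \<Rightarrow> fm" where
  "frequently_guess_fm G = Conj le_fm (Eq (guess_on_prefix G) (Cst 1))"

lemma eval_guess_on_prefix: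
  "eval f s (guess_on_prefix G) = G (map f [0..<Suc (s 1)])"
  by (simp add: guess_on_prefix_def comp_def del: upt_Suc)

lemma sat_le_fm: "sat f s le_fm \<longleftrightarrow> s 0 \<le> s 1"
  by (simp add: le_fm_def)

lemma sentence_eventually_guess_fm: "sentence (Ex 0 (All 1 (eventually_guess_fm G)))"
  by (auto simp: sentence_def eventually_guess_fm_def le_fm_def guess_on_prefix_def)

lemma sentence_frequently_guess_fm: "sentence (All 0 (Ex 1 (frequently_guess_fm G)))"
  by (auto simp: sentence_def frequently_guess_fm_def le_fm_def guess_on_prefix_def)

lemma models_eventually_guess_fm:
  "models f (Ex 0 (All 1 (eventually_guess_fm G)))
     \<longleftrightarrow> (\<forall>\<^sub>F n in sequentially. G (map f [0..<Suc n]) = 1)"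
  by (simp add: models_def eventually_guess_fm_def sat_le_fm eval_guess_on_prefix
      eventually_sequentially del: upt_Suc)

lemma models_frequently_guess_fm:
  "models f (All 0 (Ex 1 (frequently_guess_fm G)))
     \<longleftrightarrow> (\<exists>\<^sub>F n in sequentially. G (map f [0..<Suc n]) = 1)"
  by (simp add: models_def frequently_guess_fm_def sat_le_fm eval_guess_on_prefix
      frequently_sequentially del: upt_Suc)

theorem lemma4p2:
  fixes S :: "(nat \<Rightarrow> nat) set"
  assumes "guessable S"
  shows "(\<exists>x y \<phi>. qfree \<phi> \<and> sentence (Ex x (All y \<phi>)) \<and> defines_set (Ex x (All y \<phi>)) S)
       \<and> (\<exists>x y \<psi>. qfree \<psi> \<and> sentence (All x (Ex y \<psi>)) \<and> defines_set (All x (Ex y \<psi>)) S)"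
proof -
  obtain G where G: "guesser G S"
    using assms unfolding guessable_def by blast
  have "defines_set (Ex 0 (All 1 (eventually_guess_fm G))) S"
    unfolding defines_set_def models_eventually_guess_fm
    using eventually_eq_iff_eventually_const[OF guesser_eventually[OF G]] by simp
  moreover have "defines_set (All 0 (Ex 1 (frequently_guess_fm G))) S"
    unfolding defines_set_def models_frequently_guess_fm
    using frequently_eq_iff_eventually_const[OF guesser_eventually[OF G]] by simp
  moreover have "qfree (eventually_guess_fm G)" "qfree (frequently_guess_fm G)"
    by (simp_all add: eventually_guess_fm_def frequently_guess_fm_def le_fm_def)
  ultimately show ?thesis
    using sentence_eventually_guess_fm sentence_frequently_guess_fm by blast
qed

end
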